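(* Let $0<c_1\le c_2$ be constants, let $n$ be sufficiently large, let $t\in[1,n^{0.1}]$, and let $H$ be an undirected graph on $n$ vertices in which every vertex has degree between $c_1t$ and $c_2t$ and which has no cycle of length at most $8$. For every constant $\delta>0$ there is a constant $K$ (depending only on $\delta,c_1,c_2$) such that every nonempty vertex set $C$ with $H^2[C]$ of density at least $\delta$ satisfies $|C|\le Kt$.
   Context: $H^2$ (the square of $H$) is the graph on the vertex set of $H$ in which $u\neq v$ are adjacent if and only if there is a path of length exactly $2$ between $u$ and $v$ in $H$. For a graph with $n'\ge 2$ vertices and $m'$ edges its density is $m'/\binom{n'}{2}$; a one-vertex graph has density $1$. *)

theory Defs
  imports Complex_Main
begin

definition simple_graph_on :: "nat \<Rightarrow> (nat \<Rightarrow> nat \<Rightarrow> bool) \<Rightarrow> bool" where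
  "simple_graph_on n E \<longleftrightarrow>
     (\<forall>u v. E u v \<longrightarrow> u < n \<and> v < n) \<and>
     (\<forall>u v. E u v \<longrightarrow> E v u) \<and> (\<forall>u. \<not> E u u)"

definition degree :: "nat \<Rightarrow> (nat \<Rightarrow> nat \<Rightarrow> bool) \<Rightarrow> nat \<Rightarrow> nat" where
  "degree n E v = card {u. u < n \<and> E v u}"

definition is_cycle :: "(nat \<Rightarrow> nat \<Rightarrow> bool) \<Rightarrow> nat list \<Rightarrow> bool" where
  "is_cycle E xs \<longleftrightarrow> length xs \<ge> 3 \<and> distinct xs \<and>
     (\<forall>i < length xs. E (xs ! i) (xs ! ((i + 1) mod length xs)))"

definition no_short_cycles :: "(nat \<Rightarrow> nat \<Rightarrow> bool) \<Rightarrow> nat \<Rightarrow> bool" where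
  "no_short_cycles E k \<longleftrightarrow> (\<forall>xs. is_cycle E xs \<longrightarrow> length xs > k)"

definition sq_adj :: "nat \<Rightarrow> (nat \<Rightarrow> nat \<Rightarrow> bool) \<Rightarrow> nat \<Rightarrow> nat \<Rightarrow> bool" where
  "sq_adj n E u v \<longleftrightarrow> u \<noteq> v \<and> (\<exists>w. w < n \<and> E u w \<and> E w v)"

definition induced_edges :: "(nat \<Rightarrow> nat \<Rightarrow> bool) \<Rightarrow> nat set \<Rightarrow> nat set set" where
  "induced_edges G C = {{u, v} | u v. u \<in> C \<and> v \<in> C \<and> u \<noteq> v \<and> G u v}"

definition density :: "(nat \<Rightarrow> nat \<Rightarrow> bool) \<Rightarrow> nat set \<Rightarrow> real" where
  "density G C = (if card C \<le> 1 then 1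
                  else real (card (induced_edges G C)) / real (card C choose 2))"

end

theory Submission
  imports Defs
begin

text \<open>For \<open>u \<in> C\<close> let \<open>F u\<close> count the paths \<open>u - w - v\<close> of length two with
\<open>v \<in> C - {u}\<close>. It bounds the degree of \<open>u\<close> in \<open>H\<^sup>2[C]\<close>, so density \<open>\<delta>\<close> gives
\<open>\<Sum>F \<ge> \<delta> |C|\<^sup>2 / 4\<close>. Two such paths from \<open>u\<close> with different middle vertices form a path
\<open>v - w - u - w' - x\<close> of length four; as \<open>H\<close> has no cycle of length at most 8, such a path is
determined by its ends, so these pairs number at most \<open>|C|\<^sup>2\<close> in total. Pairs with a common
middle vertex number at most \<open>\<Delta> F u\<close>, where \<open>\<Delta> \<le> c\<^sub>2 t\<close> is the maximum degree. Hence
\<open>\<Sum>F\<^sup>2 \<le> |C|\<^sup>2 + \<Delta> \<Sum>F\<close>, and Cauchy-Schwarz \<open>(\<Sum>F)\<^sup>2 \<le> |C| \<Sum>F\<^sup>2\<close> forces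
\<open>|C| \<le> max (32 / \<delta>\<^sup>2) (8 \<Delta> / \<delta>)\<close>, which is \<open>O(t)\<close>. Neither the lower degree bound nor
\<open>t \<le> n powr 0.1\<close> is needed, and \<open>N = 0\<close> works.\<close>

lemma simple_graph_onD:
  assumes "simple_graph_on n E"
  shows "E u v \<Longrightarrow> u < n" "E u v \<Longrightarrow> v < n" "E u v \<Longrightarrow> E v u" "\<not> E u u"
  using assms unfolding simple_graph_on_def by auto

lemma is_cycle_if_closed_walk:
  assumes "3 \<le> length xs" "distinct xs" "successively E (xs @ [hd xs])"
  shows "is_cycle E xs"
  unfolding is_cycle_def
proof (intro conjI allI impI)
  fix i assume i: "i < length xs"
  have "E ((xs @ [hd xs]) ! i) ((xs @ [hd xs]) ! Suc i)"
    using successively_nth[OF assms(3)] i by simp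
  moreover have "(xs @ [hd xs]) ! Suc i = xs ! ((i + 1) mod length xs)"
  proof (cases "Suc i < length xs")
    case False
    then have "Suc i = length xs" using i by simp
    moreover have "xs \<noteq> []" using i by auto
    ultimately show ?thesis by (simp add: hd_conv_nth)
  qed (simp add: nth_append)
  ultimately show "E (xs ! i) (xs ! ((i + 1) mod length xs))"
    using i by (simp add: nth_append)
qed (use assms in auto)

lemma is_cycle_join_paths:
  assumes sym: "\<And>a b. E a b \<Longrightarrow> E b a"
    and walks: "successively E (a # P @ [z])" "successively E (a # Q @ [z])"
    and "distinct (a # P @ [z])" "distinct (a # Q @ [z])"
    and "set P \<inter> set Q = {}" and "P \<noteq> [] \<or> Q \<noteq> []"
  shows "is_cycle E (a # P @ z # rev Q)"
proof (rule is_cycle_if_closed_walk)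
  have "successively (\<lambda>x y. E y x) (a # Q @ [z])"
    using walks(2) by (rule successively_mono) (use sym in blast)
  then have "successively E (rev (a # Q @ [z]))"
    by (simp only: successively_rev)
  moreover have "successively E (a # P) \<and> E (last (a # P)) z"
    using walks(1) successively_append_iff[of E "a # P" "[z]"] by simp
  ultimately have "successively E ((a # P) @ rev (a # Q @ [z]))"
    by (simp only: successively_append_iff) simp
  then show "successively E ((a # P @ z # rev Q) @ [hd (a # P @ z # rev Q)])"
    by simp
qed (use assms in \<open>auto simp flip: length_greater_0_conv\<close>)

lemma short_paths_unique:
  assumes sym: "\<And>a b. E a b \<Longrightarrow> E b a" and no_cycles: "no_short_cycles E k"
  shows "successively E P \<Longrightarrow> successively E Q \<Longrightarrow> distinct P \<Longrightarrow> distinct Q \<Longrightarrow>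
    P \<noteq> [] \<Longrightarrow> Q \<noteq> [] \<Longrightarrow> hd P = hd Q \<Longrightarrow> last P = last Q \<Longrightarrow>
    length P + length Q \<le> k + 2 \<Longrightarrow> P = Q"
proof (induction P arbitrary: Q)
  case Nil
  then show ?case by simp
next
  case (Cons a P')
  then obtain Q' where Q: "Q = a # Q'" by (cases Q) auto
  consider "P' = [] \<or> Q' = []"
    | "P' \<noteq> []" "Q' \<noteq> []" "hd P' = hd Q'"
    | "P' \<noteq> []" "Q' \<noteq> []" "hd P' \<noteq> hd Q'"
    by blast
  then show ?case
  proof cases
    case 1
    then show ?thesis using Cons.prems Q
      by (metis distinct.simps(2) last.simps last_in_set list.sel(1))
  next
    case 2
    then show ?thesis using Cons Q by (simp add: successively_Cons)
  next
    case 3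
    have "last P' \<in> set Q'" using Cons.prems Q 3 by (simp add: last_in_set)
    then obtain P1 z P2 where P': "P' = P1 @ z # P2" "z \<in> set Q'" "\<forall>y\<in>set P1. y \<notin> set Q'"
      using split_list_first_prop[of P' "\<lambda>x. x \<in> set Q'"] 3 by (metis last_in_set)
    then obtain Q1 Q2 where Q': "Q' = Q1 @ z # Q2" by (meson split_list)
    have "is_cycle E (a # P1 @ z # rev Q1)"
    proof (rule is_cycle_join_paths[OF sym])
      show "successively E (a # P1 @ [z])" "distinct (a # P1 @ [z])"
        using Cons.prems(1,3) P'(1) successively_append_iff[of E "a # P1 @ [z]" P2] by auto
      show "successively E (a # Q1 @ [z])" "distinct (a # Q1 @ [z])"
        using Cons.prems(2,4) Q Q' successively_append_iff[of E "a # Q1 @ [z]" Q2] by auto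
      show "set P1 \<inter> set Q1 = {}" using P'(3) Q' by auto
      show "P1 \<noteq> [] \<or> Q1 \<noteq> []" using 3 P'(1) Q' by auto
    qed
    then have "k < length (a # P1 @ z # rev Q1)"
      using no_cycles unfolding no_short_cycles_def by blast
    then show ?thesis using Cons.prems(9) Q P'(1) Q' by simp
  qed
qed

lemma distinct_walk4_if_no_short_cycles:
  assumes sg: "simple_graph_on n E" and no_cycles: "no_short_cycles E k" "4 \<le> k"
    and path: "E v w" "E w u" "E u w'" "E w' x" and ends: "v \<noteq> u" "x \<noteq> u" "w \<noteq> w'"
  shows "distinct [v, w, u, w', x]"
proof -
  have not_cycle: "\<not> is_cycle E xs" if "length xs \<le> 4" for xs
    using no_cycles that unfolding no_short_cycles_def by fastforce
  have edges_distinct: "v \<noteq> w" "w \<noteq> u" "u \<noteq> w'" "w' \<noteq> x"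
    using path simple_graph_onD(4)[OF sg] by metis+
  have "v \<noteq> w'"
    using not_cycle[of "[v, w, u]"] is_cycle_if_closed_walk[of "[v, w, u]" E]
      path ends edges_distinct simple_graph_onD(3)[OF sg] by auto
  moreover have "w \<noteq> x"
    using not_cycle[of "[w, u, w']"] is_cycle_if_closed_walk[of "[w, u, w']" E]
      path ends edges_distinct simple_graph_onD(3)[OF sg] by auto
  moreover have "v \<noteq> x"
    using not_cycle[of "[v, w, u, w']"] is_cycle_if_closed_walk[of "[v, w, u, w']" E]
      path ends edges_distinct \<open>v \<noteq> w'\<close> simple_graph_onD(3)[OF sg] by auto
  ultimately show ?thesis using ends edges_distinct by auto
qed

definition two_paths :: "(nat \<Rightarrow> nat \<Rightarrow> bool) \<Rightarrow> nat set \<Rightarrow> nat \<Rightarrow> (nat \<times> nat) set" where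
  "two_paths E C u = {(w, v). E u w \<and> E w v \<and> v \<in> C \<and> v \<noteq> u}"

lemma finite_two_paths:
  assumes "simple_graph_on n E"
  shows "finite (two_paths E C u)"
  by (rule finite_subset[of _ "{..<n} \<times> {..<n}"])
     (auto simp: two_paths_def dest: simple_graph_onD(2)[OF assms])

lemma card_square_neighbours_le_card_two_paths:
  assumes "simple_graph_on n E"
  shows "card {v \<in> C. sq_adj n E u v} \<le> card (two_paths E C u)"
proof -
  have "{v \<in> C. sq_adj n E u v} \<subseteq> snd ` two_paths E C u"
    unfolding two_paths_def sq_adj_def by force
  then show ?thesis
    using finite_two_paths[OF assms] by (meson card_image_le card_mono finite_imageI order_trans)
qed

lemma card_two_path_pairs_same_middle_le:
  assumes sg: "simple_graph_on n E" and deg: "\<forall>v<n. real (degree n E v) \<le> D"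
  shows "real (card {(p, q) \<in> two_paths E C u \<times> two_paths E C u. fst p = fst q})
           \<le> D * real (card (two_paths E C u))"
proof -
  let ?P = "two_paths E C u"
  have fin: "finite ?P" using finite_two_paths[OF sg] .
  have fibre: "real (card {q \<in> ?P. fst q = fst p}) \<le> D" if "p \<in> ?P" for p
  proof -
    have "{q \<in> ?P. fst q = fst p} \<subseteq> Pair (fst p) ` {v. v < n \<and> E (fst p) v}"
      unfolding two_paths_def using simple_graph_onD(2)[OF sg] by force
    then have "card {q \<in> ?P. fst q = fst p} \<le> card (Pair (fst p) ` {v. v < n \<and> E (fst p) v})"
      by (intro card_mono) auto
    also have "\<dots> \<le> degree n E (fst p)"
      unfolding degree_def by (rule card_image_le) simp
    finally have "card {q \<in> ?P. fst q = fst p} \<le> degree n E (fst p)" .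
    moreover have "fst p < n"
      using that simple_graph_onD(2)[OF sg] unfolding two_paths_def by auto
    ultimately show ?thesis using deg by (meson of_nat_le_iff order_trans)
  qed
  have "{(p, q) \<in> ?P \<times> ?P. fst p = fst q} = (SIGMA p:?P. {q \<in> ?P. fst q = fst p})"
    by auto
  then have "real (card {(p, q) \<in> ?P \<times> ?P. fst p = fst q})
      = (\<Sum>p\<in>?P. real (card {q \<in> ?P. fst q = fst p}))"
    using fin by (simp add: card_SigmaI)
  also have "\<dots> \<le> D * real (card ?P)"
    using fibre sum_bounded_above[of ?P _ D] by (simp add: mult.commute)
  finally show ?thesis .
qed

lemma sum_card_two_path_pairs_distinct_middle_le:
  assumes sg: "simple_graph_on n E" and no_cycles: "no_short_cycles E 8" and "finite C"
  shows "(\<Sum>u\<in>C. card {(p, q) \<in> two_paths E C u \<times> two_paths E C u. fst p \<noteq> fst q})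
           \<le> card C ^ 2"
proof -
  define M where "M = (SIGMA u:C. {(p, q) \<in> two_paths E C u \<times> two_paths E C u. fst p \<noteq> fst q})"
  define ends :: "nat \<times> (nat \<times> nat) \<times> nat \<times> nat \<Rightarrow> nat \<times> nat"
    where "ends = (\<lambda>(u, (w, v), (w', x)). (v, x))"
  have path: "distinct [v, w, u, w', x] \<and> successively E [v, w, u, w', x]"
    if "(u, (w, v), (w', x)) \<in> M" for u w v w' x
    using that distinct_walk4_if_no_short_cycles[OF sg no_cycles, of v w u w' x]
      simple_graph_onD(3)[OF sg]
    unfolding M_def two_paths_def by auto
  have "inj_on ends M"
  proof (rule inj_onI)
    fix a b assume "a \<in> M" "b \<in> M" "ends a = ends b"
    moreover obtain u w v w' x where a: "a = (u, (w, v), (w', x))" by (cases a) auto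
    moreover obtain u2 w2 v2 w2' x2 where b: "b = (u2, (w2, v2), (w2', x2))" by (cases b) auto
    ultimately have "[v, w, u, w', x] = [v2, w2, u2, w2', x2]"
      using path short_paths_unique[OF simple_graph_onD(3)[OF sg] no_cycles,
          of "[v, w, u, w', x]" "[v2, w2, u2, w2', x2]"]
      unfolding ends_def by simp
    then show "a = b" using a b by simp
  qed
  moreover have "ends ` M \<subseteq> C \<times> C"
    unfolding ends_def M_def two_paths_def by auto
  ultimately have "card M \<le> card (C \<times> C)"
    using \<open>finite C\<close> by (intro card_inj_on_le) auto
  moreover have "card M
      = (\<Sum>u\<in>C. card {(p, q) \<in> two_paths E C u \<times> two_paths E C u. fst p \<noteq> fst q})"
    unfolding M_def using \<open>finite C\<close> finite_two_paths[OF sg]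
    by (intro card_SigmaI) (auto intro: finite_subset[of _ "two_paths E C _ \<times> two_paths E C _"])
  ultimately show ?thesis by (simp add: card_cartesian_product power2_eq_square)
qed

lemma sum_card_two_paths_squared_le:
  assumes sg: "simple_graph_on n E" and no_cycles: "no_short_cycles E 8" and "finite C"
    and deg: "\<forall>v<n. real (degree n E v) \<le> D"
  shows "(\<Sum>u\<in>C. real (card (two_paths E C u)) ^ 2)
           \<le> real (card C) ^ 2 + D * (\<Sum>u\<in>C. real (card (two_paths E C u)))"
proof -
  let ?P = "two_paths E C"
  let ?same = "\<lambda>u. {(p, q) \<in> ?P u \<times> ?P u. fst p = fst q}"
  let ?diff = "\<lambda>u. {(p, q) \<in> ?P u \<times> ?P u. fst p \<noteq> fst q}"
  have split: "real (card (?P u)) ^ 2 = real (card (?same u)) + real (card (?diff u))" for u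
  proof -
    have "finite (?P u \<times> ?P u)" using finite_two_paths[OF sg] by simp
    then have "finite (?same u)" "finite (?diff u)" by (auto intro: rev_finite_subset)
    have "card (?P u \<times> ?P u) = card (?same u \<union> ?diff u)"
      by (rule arg_cong[where f = card]) auto
    also have "\<dots> = card (?same u) + card (?diff u)"
      by (rule card_Un_disjoint) (use \<open>finite (?same u)\<close> \<open>finite (?diff u)\<close> in auto)
    finally have "card (?P u) * card (?P u) = card (?same u) + card (?diff u)"
      by (simp add: card_cartesian_product)
    then have "real (card (?P u) * card (?P u)) = real (card (?same u) + card (?diff u))"
      by (rule arg_cong)
    then show ?thesis by (simp add: power2_eq_square)
  qed
  have "(\<Sum>u\<in>C. real (card (?P u)) ^ 2)
      = (\<Sum>u\<in>C. real (card (?same u))) + (\<Sum>u\<in>C. real (card (?diff u)))"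
    by (simp add: split sum.distrib)
  also have "\<dots> \<le> D * (\<Sum>u\<in>C. real (card (?P u))) + real (card C) ^ 2"
  proof (rule add_mono)
    show "(\<Sum>u\<in>C. real (card (?same u))) \<le> D * (\<Sum>u\<in>C. real (card (?P u)))"
      unfolding sum_distrib_left
      by (rule sum_mono) (rule card_two_path_pairs_same_middle_le[OF sg deg])
    have "real (\<Sum>u\<in>C. card (?diff u)) \<le> real (card C ^ 2)"
      using sum_card_two_path_pairs_distinct_middle_le[OF sg no_cycles \<open>finite C\<close>]
      by (simp only: of_nat_le_iff)
    then show "(\<Sum>u\<in>C. real (card (?diff u))) \<le> real (card C) ^ 2" by simp
  qed
  finally show ?thesis by simp
qed

lemma card_induced_edges_le_sum:
  assumes "finite C"
  shows "card (induced_edges G C) \<le> (\<Sum>u\<in>C. card {v \<in> C. G u v})"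
proof -
  have "induced_edges G C \<subseteq> (\<lambda>(u, v). {u, v}) ` (SIGMA u:C. {v \<in> C. G u v})"
    unfolding induced_edges_def by auto
  then have "card (induced_edges G C) \<le> card ((\<lambda>(u, v). {u, v}) ` (SIGMA u:C. {v \<in> C. G u v}))"
    by (rule card_mono[rotated]) (use assms in auto)
  also have "\<dots> \<le> card (SIGMA u:C. {v \<in> C. G u v})"
    by (rule card_image_le) (use assms in auto)
  also have "\<dots> = (\<Sum>u\<in>C. card {v \<in> C. G u v})"
    using assms by (simp add: card_SigmaI)
  finally show ?thesis .
qed

lemma of_nat_choose_two: "real (m choose 2) = real m * (real m - 1) / 2"
proof (cases "m = 0")
  case False
  have "2 dvd m * (m - 1)" by (simp, presburger)
  then show ?thesis unfolding choose_two using False by (simp add: real_of_nat_div of_nat_diff)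
qed simp

lemma card_induced_edges_ge_density:
  assumes "2 \<le> card C" and "\<delta> \<le> density G C"
  shows "\<delta> * (real (card C) * (real (card C) - 1) / 2) \<le> real (card (induced_edges G C))"
proof -
  have "density G C = real (card (induced_edges G C)) / (real (card C) * (real (card C) - 1) / 2)"
    using assms(1) unfolding density_def of_nat_choose_two by simp
  moreover have "0 < real (card C) * (real (card C) - 1) / 2" using assms(1) by simp
  ultimately show ?thesis using assms(2) by (simp add: pos_le_divide_eq)
qed

lemma le_max_if_square_sum_bound:
  fixes m D \<delta> \<Phi> :: real
  assumes "0 < m" "0 < \<delta>" and lower: "\<delta> * m ^ 2 / 4 \<le> \<Phi>"
    and upper: "\<Phi> ^ 2 \<le> m * (m ^ 2 + D * \<Phi>)"
  shows "m \<le> max (32 / \<delta> ^ 2) (8 * D / \<delta>)"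
proof (cases "\<Phi> \<le> 2 * m * D")
  case True
  then have "(\<delta> * m) * m \<le> (8 * D) * m"
    using lower by (simp add: power2_eq_square algebra_simps)
  then have "\<delta> * m \<le> 8 * D" using \<open>0 < m\<close> by (rule mult_right_le_imp_le)
  then have "m \<le> 8 * D / \<delta>" using \<open>0 < \<delta>\<close> by (simp add: pos_le_divide_eq mult.commute)
  then show ?thesis by simp
next
  case False
  have "0 < \<delta> * m ^ 2 / 4" using assms(1,2) by simp
  then have "0 < \<Phi>" using lower by linarith
  then have "(2 * m * D) * \<Phi> < \<Phi> * \<Phi>" using False by (intro mult_strict_right_mono) auto
  moreover have "\<Phi> ^ 2 \<le> m ^ 3 + m * D * \<Phi>"
    using upper by (simp add: algebra_simps power_numeral_reduce)
  ultimately have "\<Phi> ^ 2 < 2 * m ^ 3" by (simp add: power2_eq_square algebra_simps)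
  moreover have "(\<delta> * m ^ 2 / 4) ^ 2 \<le> \<Phi> ^ 2"
    using lower \<open>0 < \<delta> * m ^ 2 / 4\<close> by (intro power_mono) auto
  ultimately have "(\<delta> ^ 2 * m) * m ^ 3 < 32 * m ^ 3"
    by (simp add: power_mult_distrib power_numeral_reduce algebra_simps)
  then have "\<delta> ^ 2 * m < 32" using \<open>0 < m\<close> by simp
  then have "m \<le> 32 / \<delta> ^ 2" using \<open>0 < \<delta>\<close> by (simp add: pos_le_divide_eq mult.commute)
  then show ?thesis by simp
qed

lemma sum_squared_le_card_mult_sum_squares:
  fixes f :: "'a \<Rightarrow> real"
  shows "(\<Sum>x\<in>A. f x) ^ 2 \<le> real (card A) * (\<Sum>x\<in>A. f x ^ 2)"
proof -
  have "0 \<le> (\<Sum>x\<in>A. \<Sum>y\<in>A. (f x - f y) ^ 2)"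
    by (intro sum_nonneg) simp
  also have "\<dots> = 2 * (real (card A) * (\<Sum>x\<in>A. f x ^ 2) - (\<Sum>x\<in>A. f x) ^ 2)"
    by (simp add: power2_eq_square algebra_simps sum.distrib sum_subtractf sum_distrib_left
        sum_distrib_right)
  finally show ?thesis by simp
qed

theorem card_le_if_dense_in_square:
  assumes sg: "simple_graph_on n E" and no_cycles: "no_short_cycles E 8" and "C \<subseteq> {..<n}"
    and deg: "\<forall>v<n. real (degree n E v) \<le> D"
    and "2 \<le> card C" and "0 < \<delta>" and dense: "\<delta> \<le> density (sq_adj n E) C"
  shows "real (card C) \<le> max (32 / \<delta> ^ 2) (8 * D / \<delta>)"
proof -
  have "finite C" using \<open>C \<subseteq> {..<n}\<close> finite_subset by blast
  define m where "m = real (card C)"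
  define F where "F u = real (card (two_paths E C u))" for u
  have "\<delta> * m ^ 2 / 4 \<le> \<delta> * (m * (m - 1) / 2)"
    using \<open>2 \<le> card C\<close> \<open>0 < \<delta>\<close> unfolding m_def by (simp add: power2_eq_square)
  also have "\<dots> \<le> real (card (induced_edges (sq_adj n E) C))"
    unfolding m_def using card_induced_edges_ge_density[OF \<open>2 \<le> card C\<close> dense] .
  also have "\<dots> \<le> (\<Sum>u\<in>C. real (card {v \<in> C. sq_adj n E u v}))"
    unfolding of_nat_sum[symmetric] of_nat_le_iff by (rule card_induced_edges_le_sum[OF \<open>finite C\<close>])
  also have "\<dots> \<le> (\<Sum>u\<in>C. F u)"
    unfolding F_def by (intro sum_mono) (simp add: card_square_neighbours_le_card_two_paths[OF sg])
  finally have lower: "\<delta> * m ^ 2 / 4 \<le> (\<Sum>u\<in>C. F u)" .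
  have "(\<Sum>u\<in>C. F u) ^ 2 \<le> m * (\<Sum>u\<in>C. F u ^ 2)"
    unfolding m_def by (rule sum_squared_le_card_mult_sum_squares)
  also have "\<dots> \<le> m * (m ^ 2 + D * (\<Sum>u\<in>C. F u))"
    using sum_card_two_paths_squared_le[OF sg no_cycles \<open>finite C\<close> deg]
    unfolding m_def F_def by (intro mult_left_mono) auto
  finally have upper: "(\<Sum>u\<in>C. F u) ^ 2 \<le> m * (m ^ 2 + D * (\<Sum>u\<in>C. F u))" .
  have "0 < m" using \<open>2 \<le> card C\<close> unfolding m_def by simp
  from le_max_if_square_sum_bound[OF this \<open>0 < \<delta>\<close> lower upper] show ?thesis
    unfolding m_def .
qed

corollary card_le_linear_if_dense_in_square:
  assumes "0 < \<delta>" "0 \<le> c" "1 \<le> t"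
    and graph: "simple_graph_on n E" "no_short_cycles E 8" "C \<subseteq> {..<n}"
    and deg: "\<forall>v<n. real (degree n E v) \<le> c * t"
    and dense: "\<delta> \<le> density (sq_adj n E) C"
  shows "real (card C) \<le> (1 + 32 / \<delta> ^ 2 + 8 * c / \<delta>) * t"
proof -
  define K where "K = 1 + 32 / \<delta> ^ 2 + 8 * c / \<delta>"
  have K: "1 \<le> K" "32 / \<delta> ^ 2 \<le> K" "8 * c / \<delta> \<le> K"
    unfolding K_def using \<open>0 < \<delta>\<close> \<open>0 \<le> c\<close> by simp_all
  have "real (card C) \<le> max 1 (max (32 / \<delta> ^ 2) (8 * c / \<delta> * t))"
  proof (cases "card C \<le> 1")
    case False
    then show ?thesis
      using card_le_if_dense_in_square[OF graph deg _ \<open>0 < \<delta>\<close> dense] by auto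
  qed simp
  also have "\<dots> \<le> K * t"
  proof -
    have "K \<le> K * t" using K \<open>1 \<le> t\<close> by (simp add: mult_le_cancel_left1)
    moreover have "8 * c / \<delta> * t \<le> K * t" using K \<open>1 \<le> t\<close> by (intro mult_right_mono) auto
    ultimately show ?thesis using K by (intro max.boundedI) linarith+
  qed
  finally show ?thesis unfolding K_def .
qed

theorem lemmaA6:
  fixes c1 c2 :: real
  assumes "0 < c1" and "c1 \<le> c2"
  shows "\<exists>N::nat. \<forall>\<delta>::real. \<delta> > 0 \<longrightarrow> (\<exists>K::real. \<forall>n t E C.
           n \<ge> N \<longrightarrow> 1 \<le> t \<longrightarrow> t \<le> real n powr 0.1 \<longrightarrow>
           simple_graph_on n E \<longrightarrow>
           (\<forall>v<n. c1 * t \<le> real (degree n E v) \<and> real (degree n E v) \<le> c2 * t) \<longrightarrow>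
           no_short_cycles E 8 \<longrightarrow>
           C \<subseteq> {..<n} \<longrightarrow> C \<noteq> {} \<longrightarrow>
           density (sq_adj n E) C \<ge> \<delta> \<longrightarrow>
           real (card C) \<le> K * t)"
  by (rule exI[of _ 0], intro allI impI exI, rule card_le_linear_if_dense_in_square[where c = c2])
     (use assms in auto)

end
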